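(* Let $t$ be a term with $\vdash t:A$ in the sub-affine type system for $\lambda_{\text{coin}}$. If $t$ reduces to the distribution $D_1$ and $t$ reduces to the distribution $D_2$, then $D_1\equiv D_2$ (computational equivalence).
   Context: Terms of $\lambda_{\text{coin}}$: $t ::= x \mid \lambda x.t \mid t\,t \mid 1 \mid 0 \mid \mathsf{if}\ t\ \mathsf{then}\ t\ \mathsf{else}\ t \mid \mathsf{coin}$. One-step probabilistic reduction $t\to_p r$: base rules $(\lambda x.t)r \to_1 t[r/x]$, $\mathsf{if}\ 1\ \mathsf{then}\ t\ \mathsf{else}\ u \to_1 t$, $\mathsf{if}\ 0\ \mathsf{then}\ t\ \mathsf{else}\ u \to_1 u$, $\mathsf{coin}\to_{1/2}1$, $\mathsf{coin}\to_{1/2}0$, closed under all contexts (under $\lambda$, both sides of an application, and all three positions of an if-then-else). We write $t\to^*_{q} r$ if $t\to_{p_1}\cdots\to_{p_n} r$ with $q=\prod_i p_i$. A distribution of terms is a finite list $[(p_i,t_i)]_i$; reduction is lifted to distributions by choosing a redex in a term $t$ with one-step reducts $t\to_{q_j}t'_j$ ($\sum_j q_j=1$) and replacing $(p,t)$ by the entries $(pq_j,t'_j)$; a term $t$ reduces to $D$ if $D$ is obtained from $[(1,t)]$ by finitely many such steps. Equality $\sim$ of distributions means they assign the same total probability to each term. Types: $A ::= \mathbb{B} \mid A\to A$. Sub-affine type system (contexts written as $\Gamma,\Delta$ are required to be disjoint): $\Gamma,x:A\vdash x:A$; from $\Gamma,x:A\vdash t:B$ infer $\Gamma\vdash\lambda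 x.t:A\to B$; from $\Gamma\vdash t:A\to B$ and $\Delta\vdash r:A$ infer $\Gamma,\Delta\vdash tr:B$; $\Gamma\vdash 1:\mathbb{B}$, $\Gamma\vdash 0:\mathbb{B}$, $\Gamma\vdash\mathsf{coin}:\mathbb{B}$; from $\Gamma\vdash t:\mathbb{B}$, $\Delta\vdash u:A$, $\Delta\vdash v:A$ infer $\Gamma,\Delta\vdash \mathsf{if}\ t\ \mathsf{then}\ u\ \mathsf{else}\ v:A$ (the two branches share the same context). Elimination contexts: $C ::= \lozenge \mid C\,v$ where $v$ ranges over closed terms in normal form; $C\langle t\rangle$ denotes $C[t/\lozenge]$. $C$ is an elimination context of type $A$, written $C^A$, if for every $t$ with $\vdash t:A$ we have $\vdash C\langle t\rangle:\mathbb{B}$. Computational equivalence: for distributions $D_1=[(p_i,t_i)]_i$ and $D_2=[(q_j,r_j)]_j$ of closed terms of type $A$, $D_1\equiv D_2$ if for every $C^A$, reducing we get $C\langle t_i\rangle\to^*_{u_{ik}} b_{ik}$ and $C\langle r_j\rangle\to^*_{s_{jh}} c_{jh}$ with all $b_{ik},c_{jh}$ in normal form (the $[(u_{ik},b_{ik})]_k$ forming a reduction of $C\langle t_i\rangle$ to a distribution of normal forms, and likewise for $C\langle r_j\rangle$), such that $[(p_iu_{ik},b_{ik})]_{ik}\sim[(q_js_{jh},c_{jh})]_{jh}$. *)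

theory Defs
  imports Complex_Main
begin

datatype tm = Var nat | Lam tm | App tm tm | One | Zero | Ite tm tm tm | Coin

datatype ty = TB | Arr ty ty

fun lift :: "tm \<Rightarrow> nat \<Rightarrow> tm" where
  "lift (Var i) k = (if i < k then Var i else Var (Suc i))"
| "lift (Lam t) k = Lam (lift t (Suc k))"
| "lift (App t u) k = App (lift t k) (lift u k)"
| "lift One k = One"
| "lift Zero k = Zero"
| "lift (Ite t u v) k = Ite (lift t k) (lift u k) (lift v k)"
| "lift Coin k = Coin"

fun subst :: "tm \<Rightarrow> tm \<Rightarrow> nat \<Rightarrow> tm" where
  "subst (Var i) s k = (if k < i then Var (i - 1) else if i = k then s else Var i)"
| "subst (Lam t) s k = Lam (subst t (lift s 0) (Suc k))"
| "subst (App t u) s k = App (subst t s k) (subst u s k)"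
| "subst One s k = One"
| "subst Zero s k = Zero"
| "subst (Ite t u v) s k = Ite (subst t s k) (subst u s k) (subst v s k)"
| "subst Coin s k = Coin"

text \<open>rstep t L: choosing one redex in t, its one-step reducts are the
  entries (q_j, t'_j) of L (so the q_j sum to 1).\<close>

inductive rstep :: "tm \<Rightarrow> (real \<times> tm) list \<Rightarrow> bool" where
  beta: "rstep (App (Lam t) r) [(1, subst t r 0)]"
| ifT: "rstep (Ite One t u) [(1, t)]"
| ifF: "rstep (Ite Zero t u) [(1, u)]"
| coin: "rstep Coin [(1/2, One), (1/2, Zero)]"
| lam: "rstep t L \<Longrightarrow> rstep (Lam t) (map (apsnd Lam) L)"
| appL: "rstep t L \<Longrightarrow> rstep (App t r) (map (apsnd (\<lambda>x. App x r)) L)"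
| appR: "rstep r L \<Longrightarrow> rstep (App t r) (map (apsnd (\<lambda>x. App t x)) L)"
| ite1: "rstep t L \<Longrightarrow> rstep (Ite t u v) (map (apsnd (\<lambda>x. Ite x u v)) L)"
| ite2: "rstep u L \<Longrightarrow> rstep (Ite t u v) (map (apsnd (\<lambda>x. Ite t x v)) L)"
| ite3: "rstep v L \<Longrightarrow> rstep (Ite t u v) (map (apsnd (\<lambda>x. Ite t u x)) L)"

definition step :: "tm \<Rightarrow> real \<Rightarrow> tm \<Rightarrow> bool" where
  "step t p r \<longleftrightarrow> (\<exists>L. rstep t L \<and> (p, r) \<in> set L)"

definition is_nf :: "tm \<Rightarrow> bool" where
  "is_nf t \<longleftrightarrow> \<not> (\<exists>p r. step t p r)"

type_synonym dist = "(real \<times> tm) list"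

definition dstep :: "dist \<Rightarrow> dist \<Rightarrow> bool" where
  "dstep D D' \<longleftrightarrow> (\<exists>xs ys p t L. D = xs @ (p, t) # ys \<and> rstep t L \<and>
      D' = xs @ map (\<lambda>(q, t'). (p * q, t')) L @ ys)"

definition reduces_to :: "tm \<Rightarrow> dist \<Rightarrow> bool" where
  "reduces_to t D \<longleftrightarrow> dstep\<^sup>*\<^sup>* [(1, t)] D"

definition dist_sim :: "dist \<Rightarrow> dist \<Rightarrow> bool" where
  "dist_sim D1 D2 \<longleftrightarrow> (\<forall>s. sum_list (map fst (filter (\<lambda>x. snd x = s) D1)) =
                             sum_list (map fst (filter (\<lambda>x. snd x = s) D2)))"

type_synonym ctx = "nat \<Rightarrow> ty option"

definition ext_ctx :: "ty \<Rightarrow> ctx \<Rightarrow> ctx" where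
  "ext_ctx A \<Gamma> = (\<lambda>i. case i of 0 \<Rightarrow> Some A | Suc j \<Rightarrow> \<Gamma> j)"

inductive typing :: "ctx \<Rightarrow> tm \<Rightarrow> ty \<Rightarrow> bool" where
  tvar: "\<Gamma> i = Some A \<Longrightarrow> typing \<Gamma> (Var i) A"
| tlam: "typing (ext_ctx A \<Gamma>) t B \<Longrightarrow> typing \<Gamma> (Lam t) (Arr A B)"
| tapp: "typing \<Gamma> t (Arr A B) \<Longrightarrow> typing \<Delta> r A \<Longrightarrow> dom \<Gamma> \<inter> dom \<Delta> = {}
         \<Longrightarrow> typing (\<Gamma> ++ \<Delta>) (App t r) B"
| tone: "typing \<Gamma> One TB"
| tzero: "typing \<Gamma> Zero TB"
| tcoin: "typing \<Gamma> Coin TB"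
| tite: "typing \<Gamma> t TB \<Longrightarrow> typing \<Delta> u A \<Longrightarrow> typing \<Delta> v A \<Longrightarrow> dom \<Gamma> \<inter> dom \<Delta> = {}
         \<Longrightarrow> typing (\<Gamma> ++ \<Delta>) (Ite t u v) A"

fun closed_at :: "nat \<Rightarrow> tm \<Rightarrow> bool" where
  "closed_at k (Var i) = (i < k)"
| "closed_at k (Lam t) = closed_at (Suc k) t"
| "closed_at k (App t u) = (closed_at k t \<and> closed_at k u)"
| "closed_at k One = True"
| "closed_at k Zero = True"
| "closed_at k (Ite t u v) = (closed_at k t \<and> closed_at k u \<and> closed_at k v)"
| "closed_at k Coin = True"

definition closed :: "tm \<Rightarrow> bool" where
  "closed t \<longleftrightarrow> closed_at 0 t"

text \<open>An elimination context C = \<lozenge> v1 ... vn is represented by the list [v1,...,vn];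
  plug t vs = C<t> = (...((t v1) v2)...) vn.\<close>
definition plug :: "tm \<Rightarrow> tm list \<Rightarrow> tm" where
  "plug t vs = foldl App t vs"

definition elim_ctx :: "ty \<Rightarrow> tm list \<Rightarrow> bool" where
  "elim_ctx A vs \<longleftrightarrow> (\<forall>v\<in>set vs. closed v \<and> is_nf v) \<and>
     (\<forall>t. typing Map.empty t A \<longrightarrow> typing Map.empty (plug t vs) TB)"

definition weighted :: "dist \<Rightarrow> dist list \<Rightarrow> dist" where
  "weighted D Es = concat (map2 (\<lambda>(p, _) E. map (\<lambda>(u, b). (p * u, b)) E) D Es)"

definition comp_equiv :: "ty \<Rightarrow> dist \<Rightarrow> dist \<Rightarrow> bool" where
  "comp_equiv A D1 D2 \<longleftrightarrow>
     (\<forall>x\<in>set D1 \<union> set D2. typing Map.empty (snd x) A) \<and>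
     (\<forall>vs. elim_ctx A vs \<longrightarrow>
        (\<exists>E1 E2. length E1 = length D1 \<and> length E2 = length D2 \<and>
          (\<forall>i<length D1. reduces_to (plug (snd (D1 ! i)) vs) (E1 ! i) \<and>
                          (\<forall>x\<in>set (E1 ! i). is_nf (snd x))) \<and>
          (\<forall>j<length D2. reduces_to (plug (snd (D2 ! j)) vs) (E2 ! j) \<and>
                          (\<forall>x\<in>set (E2 ! j). is_nf (snd x))) \<and>
          dist_sim (weighted D1 E1) (weighted D2 E2)))"

end

theory Submission
  imports Defs
begin

text \<open>
  Types are interpreted by finite-dimensional real vectors: a boolean by the probability of
  being 1, and \<open>A \<rightarrow> B\<close> by an affine map \<open>\<real>^dim A \<rightarrow> \<real>^dim B\<close>. Since contexts are split
  disjointly, a denotation is affine in each free variable; so beta-reduction preserves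
  denotations, and a coin step writes the denotation as the average of those of its two reducts.
  Hence the expected denotation of a distribution is invariant under reduction. A closed boolean
  normal form is 1 or 0, so every normal distribution reached from a closed boolean term gives 1
  the probability equal to the term's denotation. Sub-affinity also yields weak normalization, so
  for every elimination context \<open>C\<close> the terms \<open>C\<langle>t\<^sub>i\<rangle>\<close> and \<open>C\<langle>r\<^sub>j\<rangle>\<close> normalize, and the two
  weighted distributions of booleans are both normal distributions reached from \<open>C\<langle>t\<rangle>\<close>.
\<close>

section \<open>Affine maps as vectors\<close>

type_synonym vec = "nat \<Rightarrow> real"

type_synonym env = "nat \<Rightarrow> vec"

fun dim_ty :: "ty \<Rightarrow> nat" where
  "dim_ty TB = 1"
| "dim_ty (Arr A B) = Suc (dim_ty A) * dim_ty B"

definition acomb :: "real \<Rightarrow> vec \<Rightarrow> vec \<Rightarrow> vec" where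
  "acomb q x y = (\<lambda>j. q * x j + (1 - q) * y j)"

definition vanishes_from :: "nat \<Rightarrow> vec \<Rightarrow> bool" where
  "vanishes_from n x \<longleftrightarrow> (\<forall>j\<ge>n. x j = 0)"

definition trunc :: "nat \<Rightarrow> vec \<Rightarrow> vec" where
  "trunc n x = (\<lambda>j. if j < n then x j else 0)"

definition bool_vec :: "real \<Rightarrow> vec" where
  "bool_vec p = (\<lambda>j. if j = 0 then p else 0)"

(* An affine map \<real>^n \<rightarrow> \<real>^m is stored by its values at vertex 0 = 0 and vertex (Suc k) = e_k,
   as n + 1 consecutive blocks of length m; apply_tab evaluates the affine interpolation. *)
definition vertex :: "nat \<Rightarrow> vec" where
  "vertex k = (\<lambda>i. if k = Suc i then 1 else 0)"

definition tabulate :: "nat \<Rightarrow> nat \<Rightarrow> (vec \<Rightarrow> vec) \<Rightarrow> vec" where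
  "tabulate n m g = (\<lambda>i. if i < Suc n * m then g (vertex (i div m)) (i mod m) else 0)"

definition apply_tab :: "nat \<Rightarrow> nat \<Rightarrow> vec \<Rightarrow> vec \<Rightarrow> vec" where
  "apply_tab n m f a = (\<lambda>j. if j < m then f j + (\<Sum>k<n. a k * (f (Suc k * m + j) - f j)) else 0)"

lemma acomb_same [simp]: "acomb q x x = x"
  by (auto simp: acomb_def algebra_simps)

lemma vanishes_from_acomb: "vanishes_from n x \<Longrightarrow> vanishes_from n y \<Longrightarrow> vanishes_from n (acomb q x y)"
  by (simp add: vanishes_from_def acomb_def)

lemma trunc_vanishes_from: "vanishes_from n x \<Longrightarrow> trunc n x = x"
  by (auto simp: vanishes_from_def trunc_def)

lemma trunc_acomb: "trunc n (acomb q x y) = acomb q (trunc n x) (trunc n y)"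
  by (auto simp: trunc_def acomb_def)

lemma tabulate_acomb:
  "tabulate n m (\<lambda>a. acomb q (g a) (h a)) = acomb q (tabulate n m g) (tabulate n m h)"
  by (auto simp: tabulate_def acomb_def)

lemma apply_tab_acomb_fun:
  "apply_tab n m (acomb q f g) a = acomb q (apply_tab n m f a) (apply_tab n m g a)"
proof (rule ext)
  fix j
  have "(\<Sum>k<n. a k * (acomb q f g (Suc k * m + j) - acomb q f g j))
     = q * (\<Sum>k<n. a k * (f (Suc k * m + j) - f j)) + (1 - q) * (\<Sum>k<n. a k * (g (Suc k * m + j) - g j))"
    by (simp add: acomb_def sum_distrib_left sum.distrib[symmetric] algebra_simps)
  then show "apply_tab n m (acomb q f g) a j = acomb q (apply_tab n m f a) (apply_tab n m g a) j"
    by (simp add: apply_tab_def acomb_def algebra_simps)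
qed

lemma apply_tab_acomb_arg:
  "apply_tab n m f (acomb q a b) = acomb q (apply_tab n m f a) (apply_tab n m f b)"
proof (rule ext)
  fix j
  have "(\<Sum>k<n. acomb q a b k * (f (Suc k * m + j) - f j))
     = q * (\<Sum>k<n. a k * (f (Suc k * m + j) - f j)) + (1 - q) * (\<Sum>k<n. b k * (f (Suc k * m + j) - f j))"
    by (simp add: acomb_def sum_distrib_left sum.distrib[symmetric] algebra_simps)
  then show "apply_tab n m f (acomb q a b) j = acomb q (apply_tab n m f a) (apply_tab n m f b) j"
    by (simp add: apply_tab_def acomb_def algebra_simps)
qed

lemma acomb_acomb_weight: "acomb (acomb q c d 0) u v = acomb q (acomb (c 0) u v) (acomb (d 0) u v)"
  by (auto simp: acomb_def algebra_simps)

lemma acomb_acomb_points: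
  "acomb c (acomb q u1 u2) (acomb q v1 v2) = acomb q (acomb c u1 v1) (acomb c u2 v2)"
  by (auto simp: acomb_def algebra_simps)

lemma vertex_0: "vertex 0 = (\<lambda>_. 0)"
  by (simp add: vertex_def)

lemma vanishes_from_vertex: "k \<le> n \<Longrightarrow> vanishes_from n (vertex k)"
  by (auto simp: vanishes_from_def vertex_def)

lemma affine_interpolation:
  assumes aff: "\<And>x y q. vanishes_from n x \<Longrightarrow> vanishes_from n y \<Longrightarrow>
      g (acomb q x y) = acomb q (g x) (g y)"
  shows "p \<le> n \<Longrightarrow> vanishes_from p a \<Longrightarrow>
    g a = (\<lambda>j. g (vertex 0) j + (\<Sum>k<p. a k * (g (vertex (Suc k)) j - g (vertex 0) j)))"
proof (induction p arbitrary: a)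
  case 0
  then have "a = vertex 0" by (auto simp: vanishes_from_def vertex_0)
  then show ?case by simp
next
  case (Suc p)
  define a' where "a' = a(p := 0)"
  define z where "z = vertex 0"
  define e where "e = vertex (Suc p)"
  define X where "X = acomb 2 a' z"
  define Y where "Y = acomb (2 * a p) e z"
  have a': "vanishes_from p a'" "vanishes_from n a'"
    using Suc.prems by (auto simp: vanishes_from_def a'_def)
  have ze: "vanishes_from n z" "vanishes_from n e"
    using Suc.prems by (auto simp: z_def e_def intro: vanishes_from_vertex)
  \<comment> \<open>\<open>a = a' + a p \<cdot> e\<close> is the midpoint of \<open>X = 2 a'\<close> and \<open>Y = 2 a p \<cdot> e\<close>\<close>
  have aXY: "a = acomb (1/2) X Y"
    by (rule ext) (simp add: X_def Y_def acomb_def z_def e_def vertex_def a'_def)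
  have "vanishes_from n X" "vanishes_from n Y"
    by (simp_all add: X_def Y_def vanishes_from_acomb a' ze)
  then have "g a = acomb (1/2) (g X) (g Y)"
    unfolding aXY by (rule aff)
  moreover have "g X = acomb 2 (g a') (g z)" "g Y = acomb (2 * a p) (g e) (g z)"
    using aff a' ze by (simp_all add: X_def Y_def)
  ultimately have ga: "g a j = g a' j + a p * (g e j - g z j)" for j
    by (simp add: acomb_def algebra_simps)
  have "(\<Sum>k<p. a' k * c k) = (\<Sum>k<p. a k * c k)" for c :: "nat \<Rightarrow> real"
    by (rule sum.cong) (auto simp: a'_def)
  then have "g a' j = g z j + (\<Sum>k<p. a k * (g (vertex (Suc k)) j - g z j))" for j
    using Suc.IH[OF _ a'(1)] Suc.prems(1) by (simp add: z_def)
  then show ?case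
    by (simp add: fun_eq_iff ga z_def e_def)
qed

lemma tabulate_block: "k \<le> n \<Longrightarrow> j < m \<Longrightarrow> tabulate n m g (k * m + j) = g (vertex k) j"
proof -
  assume "k \<le> n" "j < m"
  then have "k * m + j < Suc k * m" by simp
  also have "\<dots> \<le> Suc n * m" using \<open>k \<le> n\<close> by simp
  finally show ?thesis using \<open>j < m\<close> by (simp add: tabulate_def)
qed

lemma apply_tab_tabulate:
  assumes "vanishes_from n a"
    and aff: "\<And>x y q. vanishes_from n x \<Longrightarrow> vanishes_from n y \<Longrightarrow>
      g (acomb q x y) = acomb q (g x) (g y)"
    and vg: "\<And>x. vanishes_from n x \<Longrightarrow> vanishes_from m (g x)"
  shows "apply_tab n m (tabulate n m g) a = g a"
proof (rule ext)
  fix j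
  show "apply_tab n m (tabulate n m g) a j = g a j"
  proof (cases "j < m")
    case True
    have blocks: "tabulate n m g (Suc k * m + j) = g (vertex (Suc k)) j" if "k < n" for k
      using tabulate_block[of "Suc k" n j m] that True by simp
    have base: "tabulate n m g j = g (vertex 0) j"
      using tabulate_block[of 0 n j m] True by simp
    have "apply_tab n m (tabulate n m g) a j =
        tabulate n m g j + (\<Sum>k<n. a k * (tabulate n m g (Suc k * m + j) - tabulate n m g j))"
      using True by (simp add: apply_tab_def)
    also have "\<dots> = g (vertex 0) j + (\<Sum>k<n. a k * (g (vertex (Suc k)) j - g (vertex 0) j))"
      by (intro arg_cong2[where f = "(+)"] sum.cong) (simp_all only: base blocks lessThan_iff)
    also have "\<dots> = g a j"
      by (simp only: affine_interpolation[OF aff order.refl assms(1)])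
    finally show ?thesis .
  next
    case False
    then show ?thesis using vg[OF assms(1)] by (simp add: apply_tab_def vanishes_from_def)
  qed
qed

definition insert_at :: "nat \<Rightarrow> 'a \<Rightarrow> (nat \<Rightarrow> 'a) \<Rightarrow> nat \<Rightarrow> 'a" where
  "insert_at k x f = (\<lambda>i. if i < k then f i else if i = k then x else f (i - 1))"

definition drop_at :: "nat \<Rightarrow> (nat \<Rightarrow> 'a) \<Rightarrow> nat \<Rightarrow> 'a" where
  "drop_at k f = (\<lambda>i. if i < k then f i else f (Suc i))"

lemma insert_at_same: "insert_at k x f k = x"
  by (simp add: insert_at_def)

lemma insert_at_upd_same: "(insert_at k z \<rho>)(k := x) = insert_at k x \<rho>"
  by (auto simp: insert_at_def fun_eq_iff)

lemma insert_at_0_upd: "insert_at 0 a (\<rho>(i := x)) = (insert_at 0 a \<rho>)(Suc i := x)"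
  by (auto simp: insert_at_def fun_eq_iff)

lemma ext_ctx_insert_at: "ext_ctx A \<Gamma> = insert_at 0 (Some A) \<Gamma>"
  by (auto simp: ext_ctx_def insert_at_def split: nat.split)

lemma insert_at_Suc_insert_at_0: "insert_at (Suc k) x (insert_at 0 a f) = insert_at 0 a (insert_at k x f)"
  by (auto simp: insert_at_def fun_eq_iff)

lemma drop_at_Suc_insert_at_0: "drop_at (Suc k) (insert_at 0 a f) = insert_at 0 a (drop_at k f)"
  by (auto simp: insert_at_def drop_at_def fun_eq_iff)

lemma drop_at_insert_at: "drop_at k (insert_at k x f) = f"
  by (auto simp: insert_at_def drop_at_def)

lemma drop_at_map_add: "drop_at k (\<Gamma> ++ \<Delta>) = drop_at k \<Gamma> ++ drop_at k \<Delta>"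
  by (auto simp: drop_at_def map_add_def)

lemma insert_at_map_add: "insert_at k x \<Gamma> ++ insert_at k None \<Delta> = insert_at k x (\<Gamma> ++ \<Delta>)"
  by (auto simp: insert_at_def map_add_def split: option.split)

lemma dom_drop_at_disjoint:
  "dom \<Gamma> \<inter> dom \<Delta> = {} \<Longrightarrow> dom (drop_at k \<Gamma>) \<inter> dom (drop_at k \<Delta>) = {}"
  by (auto simp: drop_at_def disjoint_iff domIff)

lemma dom_insert_at_None_disjoint:
  "dom \<Gamma> \<inter> dom \<Delta> = {} \<Longrightarrow> dom (insert_at k x \<Gamma>) \<inter> dom (insert_at k None \<Delta>) = {}"
  by (auto simp: insert_at_def disjoint_iff domIff)

lemma map_add_le_split:
  assumes le: "\<Gamma> ++ \<Delta> \<subseteq>\<^sub>m \<Gamma>'" and disj: "dom \<Gamma> \<inter> dom \<Delta> = {}"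
  shows "\<Gamma> \<subseteq>\<^sub>m \<Gamma>' |` (- dom \<Delta>)" and "dom (\<Gamma>' |` (- dom \<Delta>)) \<inter> dom \<Delta> = {}"
    and "\<Gamma>' |` (- dom \<Delta>) ++ \<Delta> = \<Gamma>'"
proof -
  have \<Delta>: "\<Delta> \<subseteq>\<^sub>m \<Gamma>'" using le map_le_map_add map_le_trans by blast
  show "\<Gamma> \<subseteq>\<^sub>m \<Gamma>' |` (- dom \<Delta>)" unfolding map_le_def
  proof
    fix i assume i: "i \<in> dom \<Gamma>"
    then have "i \<notin> dom \<Delta>" using disj by blast
    moreover have "(\<Gamma> ++ \<Delta>) i = \<Gamma>' i" using le i unfolding map_le_def by auto
    ultimately show "\<Gamma> i = (\<Gamma>' |` (- dom \<Delta>)) i" by (simp add: map_add_dom_app_simps(3))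
  qed
  show "dom (\<Gamma>' |` (- dom \<Delta>)) \<inter> dom \<Delta> = {}" by auto
  show "\<Gamma>' |` (- dom \<Delta>) ++ \<Delta> = \<Gamma>'"
  proof
    fix i show "(\<Gamma>' |` (- dom \<Delta>) ++ \<Delta>) i = \<Gamma>' i"
      using \<Delta> unfolding map_le_def by (cases "i \<in> dom \<Delta>") (simp_all add: map_add_dom_app_simps)
  qed
qed

section \<open>Denotational semantics\<close>

(* A boolean denotes its probability of being 1, in coordinate 0. Variables are read through
   trunc, so that denotations vanish beyond the dimension of their type for every environment. *)
inductive den :: "ctx \<Rightarrow> tm \<Rightarrow> ty \<Rightarrow> (env \<Rightarrow> vec) \<Rightarrow> bool" where
  var: "\<Gamma> i = Some A \<Longrightarrow> den \<Gamma> (Var i) A (\<lambda>\<rho>. trunc (dim_ty A) (\<rho> i))"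
| lam: "den (ext_ctx A \<Gamma>) t B F \<Longrightarrow>
    den \<Gamma> (Lam t) (Arr A B) (\<lambda>\<rho>. tabulate (dim_ty A) (dim_ty B) (\<lambda>a. F (insert_at 0 a \<rho>)))"
| app: "den \<Gamma> t (Arr A B) F \<Longrightarrow> den \<Delta> r A G \<Longrightarrow> dom \<Gamma> \<inter> dom \<Delta> = {} \<Longrightarrow>
    den (\<Gamma> ++ \<Delta>) (App t r) B (\<lambda>\<rho>. apply_tab (dim_ty A) (dim_ty B) (F \<rho>) (G \<rho>))"
| one: "den \<Gamma> One TB (\<lambda>\<rho>. bool_vec 1)"
| zero: "den \<Gamma> Zero TB (\<lambda>\<rho>. bool_vec 0)"
| coin: "den \<Gamma> Coin TB (\<lambda>\<rho>. bool_vec (1/2))"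
| ite: "den \<Gamma> t TB F \<Longrightarrow> den \<Delta> u A U \<Longrightarrow> den \<Delta> v A V \<Longrightarrow> dom \<Gamma> \<inter> dom \<Delta> = {} \<Longrightarrow>
    den (\<Gamma> ++ \<Delta>) (Ite t u v) A (\<lambda>\<rho>. acomb (F \<rho> 0) (U \<rho>) (V \<rho>))"

inductive_cases den_LamE: "den \<Gamma> (Lam t) A F"
inductive_cases den_AppE: "den \<Gamma> (App t r) A F"
inductive_cases den_IteE: "den \<Gamma> (Ite c u v) A F"
inductive_cases den_OneE: "den \<Gamma> One A F"
inductive_cases den_ZeroE: "den \<Gamma> Zero A F"
inductive_cases den_CoinE: "den \<Gamma> Coin A F"

lemma den_typing: "den \<Gamma> t A F \<Longrightarrow> typing \<Gamma> t A"
  by (induction rule: den.induct) (auto intro: typing.intros)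

lemma typing_den: "typing \<Gamma> t A \<Longrightarrow> \<exists>F. den \<Gamma> t A F"
  by (induction rule: typing.induct) (auto intro: den.intros)

lemma den_vanishes_from: "den \<Gamma> t A F \<Longrightarrow> vanishes_from (dim_ty A) (F \<rho>)"
  by (induction arbitrary: \<rho> rule: den.induct)
    (auto simp: vanishes_from_def trunc_def tabulate_def apply_tab_def bool_vec_def acomb_def)

lemma den_local: "den \<Gamma> t A F \<Longrightarrow> \<forall>i\<in>dom \<Gamma>. \<rho> i = \<rho>' i \<Longrightarrow> F \<rho> = F \<rho>'"
proof (induction arbitrary: \<rho> \<rho>' rule: den.induct)
  case (lam A \<Gamma> t B F)
  have "F (insert_at 0 a \<rho>) = F (insert_at 0 a \<rho>')" for a
    by (rule lam.IH) (use lam.prems in \<open>auto simp: ext_ctx_def insert_at_def split: nat.splits\<close>)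
  then show ?case by simp
next
  case (app \<Gamma> t A B F \<Delta> r G)
  then show ?case by (metis domIff map_add_None)
next
  case (ite \<Gamma> t F \<Delta> u A U v V)
  then show ?case by (metis domIff map_add_None)
qed (auto simp: dom_def)

lemma den_affine:
  "den \<Gamma> t A F \<Longrightarrow> F (\<rho>(i := acomb q x y)) = acomb q (F (\<rho>(i := x))) (F (\<rho>(i := y)))"
proof (induction arbitrary: \<rho> i rule: den.induct)
  case (var \<Gamma> j A)
  then show ?case by (simp add: trunc_acomb)
next
  case (lam A \<Gamma> t B F)
  then show ?case by (simp only: insert_at_0_upd tabulate_acomb)
next
  case (app \<Gamma> t A B F \<Delta> r G)
  show ?case
  proof (cases "i \<in> dom \<Gamma>")
    case True
    then have "i \<notin> dom \<Delta>" using app.hyps(3) by auto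
    then have G: "G (\<rho>(i := z)) = G \<rho>" for z by (intro den_local[OF app.hyps(2)]) auto
    show ?thesis by (simp only: G app.IH apply_tab_acomb_fun acomb_same)
  next
    case False
    then have F: "F (\<rho>(i := z)) = F \<rho>" for z by (intro den_local[OF app.hyps(1)]) auto
    show ?thesis by (simp only: F app.IH apply_tab_acomb_arg acomb_same)
  qed
next
  case (ite \<Gamma> t F \<Delta> u A U v V)
  show ?case
  proof (cases "i \<in> dom \<Gamma>")
    case True
    then have "i \<notin> dom \<Delta>" using ite.hyps(4) by auto
    then have UV: "U (\<rho>(i := z)) = U \<rho>" "V (\<rho>(i := z)) = V \<rho>" for z
      by (intro den_local[OF ite.hyps(2)] den_local[OF ite.hyps(3)]; auto)+
    show ?thesis by (simp only: UV ite.IH acomb_acomb_weight acomb_same)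
  next
    case False
    then have F: "F (\<rho>(i := z)) = F \<rho>" for z by (intro den_local[OF ite.hyps(1)]) auto
    show ?thesis by (simp only: F ite.IH acomb_acomb_points acomb_same)
  qed
qed simp_all

lemma den_weaken: "den \<Gamma> t A F \<Longrightarrow> \<Gamma> \<subseteq>\<^sub>m \<Gamma>' \<Longrightarrow> den \<Gamma>' t A F"
proof (induction arbitrary: \<Gamma>' rule: den.induct)
  case (var \<Gamma> i A)
  then have "\<Gamma>' i = Some A" unfolding map_le_def by (metis domI)
  then show ?case by (rule den.var)
next
  case (lam A \<Gamma> t B F)
  then have "ext_ctx A \<Gamma> \<subseteq>\<^sub>m ext_ctx A \<Gamma>'"
    by (auto simp: map_le_def ext_ctx_def split: nat.splits)
  then show ?case by (simp add: lam.IH den.lam)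
next
  case (app \<Gamma> t A B F \<Delta> r G)
  note split = map_add_le_split[OF app.prems app.hyps(3)]
  show ?case using den.app[OF app.IH(1)[OF split(1)] app.IH(2)[OF map_le_refl] split(2)] split(3) by simp
next
  case (ite \<Gamma> t F \<Delta> u A U v V)
  note split = map_add_le_split[OF ite.prems ite.hyps(4)]
  show ?case
    using den.ite[OF ite.IH(1)[OF split(1)] ite.IH(2,3)[OF map_le_refl] split(2)] split(3) by simp
qed (auto intro: den.intros)

lemma den_lift: "den \<Delta> s A G \<Longrightarrow> den (insert_at k None \<Delta>) (lift s k) A (\<lambda>\<rho>. G (drop_at k \<rho>))"
proof (induction arbitrary: k rule: den.induct)
  case (var \<Delta> i A)
  let ?j = "if i < k then i else Suc i"
  have "den (insert_at k None \<Delta>) (Var ?j) A (\<lambda>\<rho>. trunc (dim_ty A) (\<rho> ?j))"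
    using var by (intro den.var) (auto simp: insert_at_def)
  moreover have "(\<lambda>\<rho>. trunc (dim_ty A) (drop_at k \<rho> i)) = (\<lambda>\<rho>. trunc (dim_ty A) (\<rho> ?j))"
    by (auto simp: drop_at_def)
  moreover have "lift (Var i) k = Var ?j" by simp
  ultimately show ?case by (simp only:)
next
  case (lam A \<Gamma> t B F)
  show ?case
    using den.lam[OF lam.IH[of "Suc k", unfolded ext_ctx_insert_at insert_at_Suc_insert_at_0,
          folded ext_ctx_insert_at]]
    by (simp add: drop_at_Suc_insert_at_0)
next
  case (app \<Gamma> t A B F \<Delta> r G)
  then show ?case
    using den.app[OF app.IH dom_insert_at_None_disjoint[OF app.hyps(3)]]
    by (simp add: insert_at_map_add)
next
  case (ite \<Gamma> t F \<Delta> u A U v V)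
  then show ?case
    using den.ite[OF ite.IH dom_insert_at_None_disjoint[OF ite.hyps(4)]]
    by (simp add: insert_at_map_add)
qed (auto intro: den.intros)

lemma den_subst_fresh:
  "den \<Gamma> t B F \<Longrightarrow> \<Gamma> k = None \<Longrightarrow>
    den (drop_at k \<Gamma>) (subst t s k) B (\<lambda>\<rho>. F (insert_at k (H \<rho>) \<rho>))"
proof (induction arbitrary: k s H rule: den.induct)
  case (var \<Gamma> i A)
  then have "i \<noteq> k" by auto
  let ?j = "if k < i then i - 1 else i"
  have "den (drop_at k \<Gamma>) (Var ?j) A (\<lambda>\<rho>. trunc (dim_ty A) (\<rho> ?j))"
    using var \<open>i \<noteq> k\<close> by (intro den.var) (auto simp: drop_at_def)
  moreover have "(\<lambda>\<rho>. trunc (dim_ty A) (insert_at k (H \<rho>) \<rho> i)) = (\<lambda>\<rho>. trunc (dim_ty A) (\<rho> ?j))"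
    using \<open>i \<noteq> k\<close> by (auto simp: insert_at_def)
  moreover have "subst (Var i) s k = Var ?j" using \<open>i \<noteq> k\<close> by simp
  ultimately show ?case by (simp only:)
next
  case (lam A \<Gamma> t B F)
  have "ext_ctx A \<Gamma> (Suc k) = None" using lam.prems by (simp add: ext_ctx_def)
  from den.lam[OF lam.IH[OF this, of "lift s 0" "\<lambda>\<rho>. H (drop_at 0 \<rho>)",
        unfolded ext_ctx_insert_at drop_at_Suc_insert_at_0, folded ext_ctx_insert_at]]
  show ?case by (simp add: drop_at_insert_at insert_at_Suc_insert_at_0)
next
  case (app \<Gamma> t A B F \<Delta> r G)
  have "\<Gamma> k = None" "\<Delta> k = None" using app.prems by auto
  then show ?case
    using den.app[OF app.IH(1)[of k s H] app.IH(2)[of k s H] dom_drop_at_disjoint[OF app.hyps(3)]]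
    by (simp add: drop_at_map_add)
next
  case (ite \<Gamma> t F \<Delta> u A U v V)
  have "\<Gamma> k = None" "\<Delta> k = None" using ite.prems by auto
  then show ?case
    using den.ite[OF ite.IH(1)[of k s H] ite.IH(2,3)[of k s H] dom_drop_at_disjoint[OF ite.hyps(4)]]
    by (simp add: drop_at_map_add)
qed (auto intro: den.intros)

lemma drop_at_split_disjoint:
  assumes "dom (drop_at k (\<Gamma>1 ++ \<Gamma>2)) \<inter> dom \<Delta> = {}" and "dom \<Gamma>1 \<inter> dom \<Gamma>2 = {}"
  shows "dom (drop_at k \<Gamma>1) \<inter> dom \<Delta> = {}" and "dom (drop_at k \<Gamma>2) \<inter> dom \<Delta> = {}"
    and "dom (drop_at k \<Gamma>1 ++ \<Delta>) \<inter> dom (drop_at k \<Gamma>2) = {}"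
    and "dom (drop_at k \<Gamma>1) \<inter> dom (drop_at k \<Gamma>2 ++ \<Delta>) = {}"
    and "(drop_at k \<Gamma>1 ++ \<Delta>) ++ drop_at k \<Gamma>2 = drop_at k (\<Gamma>1 ++ \<Gamma>2) ++ \<Delta>"
proof -
  show 1: "dom (drop_at k \<Gamma>1) \<inter> dom \<Delta> = {}" and 2: "dom (drop_at k \<Gamma>2) \<inter> dom \<Delta> = {}"
    using assms(1) by (auto simp: drop_at_map_add)
  have 12: "dom (drop_at k \<Gamma>1) \<inter> dom (drop_at k \<Gamma>2) = {}" by (rule dom_drop_at_disjoint[OF assms(2)])
  show "dom (drop_at k \<Gamma>1 ++ \<Delta>) \<inter> dom (drop_at k \<Gamma>2) = {}"
    and "dom (drop_at k \<Gamma>1) \<inter> dom (drop_at k \<Gamma>2 ++ \<Delta>) = {}"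
    using 1 2 12 by auto
  have "\<Delta> ++ drop_at k \<Gamma>2 = drop_at k \<Gamma>2 ++ \<Delta>"
    using 2 by (simp add: map_add_comm Int_commute)
  then show "(drop_at k \<Gamma>1 ++ \<Delta>) ++ drop_at k \<Gamma>2 = drop_at k (\<Gamma>1 ++ \<Gamma>2) ++ \<Delta>"
    by (simp add: drop_at_map_add flip: map_add_assoc)
qed

lemma den_subst_Var:
  assumes "\<Gamma> i = Some B" and "\<Gamma> k = Some A" and G: "den \<Delta> s A G"
    and disj: "dom (drop_at k \<Gamma>) \<inter> dom \<Delta> = {}"
  shows "den (drop_at k \<Gamma> ++ \<Delta>) (subst (Var i) s k) B (\<lambda>\<rho>. trunc (dim_ty B) (insert_at k (G \<rho>) \<rho> i))"
proof (cases "i = k")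
  case True
  have "(\<lambda>\<rho>. trunc (dim_ty A) (G \<rho>)) = G"
    using den_vanishes_from[OF G] by (simp add: trunc_vanishes_from)
  then show ?thesis
    using True assms(1,2) den_weaken[OF G map_le_map_add] by (simp add: insert_at_same)
next
  case False
  let ?\<Gamma> = "\<Gamma>(k := None)"
  have "den ?\<Gamma> (Var i) B (\<lambda>\<rho>. trunc (dim_ty B) (\<rho> i))"
    using assms(1) False by (intro den.var) simp
  from den_subst_fresh[OF this fun_upd_same, of s G]
  have "den (drop_at k ?\<Gamma>) (subst (Var i) s k) B (\<lambda>\<rho>. trunc (dim_ty B) (insert_at k (G \<rho>) \<rho> i))" .
  moreover have "drop_at k ?\<Gamma> = drop_at k \<Gamma>" by (auto simp: drop_at_def fun_eq_iff)
  ultimately have "den (drop_at k \<Gamma>) (subst (Var i) s k) B (\<lambda>\<rho>. trunc (dim_ty B) (insert_at k (G \<rho>) \<rho> i))"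
    by (simp only:)
  then show ?thesis by (rule den_weaken) (metis disj map_add_comm map_le_map_add)
qed

lemma den_subst:
  "den \<Gamma> t B F \<Longrightarrow> \<Gamma> k = Some A \<Longrightarrow> den \<Delta> s A G \<Longrightarrow> dom (drop_at k \<Gamma>) \<inter> dom \<Delta> = {} \<Longrightarrow>
    den (drop_at k \<Gamma> ++ \<Delta>) (subst t s k) B (\<lambda>\<rho>. F (insert_at k (G \<rho>) \<rho>))"
proof (induction arbitrary: k s \<Delta> G A rule: den.induct)
  case (var \<Gamma> i B)
  then show ?case by (rule den_subst_Var)
next
  case (lam A' \<Gamma> t B' F)
  have k: "ext_ctx A' \<Gamma> (Suc k) = Some A" using lam.prems(1) by (simp add: ext_ctx_def)
  have d: "dom (drop_at (Suc k) (ext_ctx A' \<Gamma>)) \<inter> dom (insert_at 0 None \<Delta>) = {}"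
    using dom_insert_at_None_disjoint[OF lam.prems(3)]
    by (simp add: ext_ctx_insert_at drop_at_Suc_insert_at_0)
  from lam.IH[OF k den_lift[OF lam.prems(2), of 0] d]
  have "den (ext_ctx A' (drop_at k \<Gamma> ++ \<Delta>)) (subst t (lift s 0) (Suc k)) B'
      (\<lambda>\<rho>. F (insert_at (Suc k) (G (drop_at 0 \<rho>)) \<rho>))"
    by (simp add: ext_ctx_insert_at drop_at_Suc_insert_at_0 insert_at_map_add)
  from den.lam[OF this] show ?case by (simp add: drop_at_insert_at insert_at_Suc_insert_at_0)
next
  case (app \<Gamma>1 t1 A1 B1 F1 \<Gamma>2 t2 F2)
  note d = drop_at_split_disjoint[OF app.prems(3) app.hyps(3)]
  show ?case
  proof (cases "\<Gamma>2 k = None")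
    case True
    then have "\<Gamma>1 k = Some A" using app.prems(1) by (simp add: map_add_def)
    from den.app[OF app.IH(1)[OF this app.prems(2) d(1)] den_subst_fresh[OF app.hyps(2) True] d(3)]
    show ?thesis by (simp add: d(5))
  next
    case False
    then have "\<Gamma>2 k = Some A" "\<Gamma>1 k = None" using app.prems(1) app.hyps(3) by (auto simp: map_add_def)
    from den.app[OF den_subst_fresh[OF app.hyps(1) this(2)] app.IH(2)[OF this(1) app.prems(2) d(2)] d(4)]
    show ?thesis by (simp add: drop_at_map_add)
  qed
next
  case (ite \<Gamma>1 c Fc \<Gamma>2 u A1 U v V)
  note d = drop_at_split_disjoint[OF ite.prems(3) ite.hyps(4)]
  show ?case
  proof (cases "\<Gamma>2 k = None")
    case True
    then have "\<Gamma>1 k = Some A" using ite.prems(1) by (simp add: map_add_def)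
    from den.ite[OF ite.IH(1)[OF this ite.prems(2) d(1)]
        den_subst_fresh[OF ite.hyps(2) True] den_subst_fresh[OF ite.hyps(3) True] d(3)]
    show ?thesis by (simp add: d(5))
  next
    case False
    then have "\<Gamma>2 k = Some A" "\<Gamma>1 k = None" using ite.prems(1) ite.hyps(4) by (auto simp: map_add_def)
    from den.ite[OF den_subst_fresh[OF ite.hyps(1) this(2)] ite.IH(2,3)[OF this(1) ite.prems(2) d(2)] d(4)]
    show ?thesis by (simp add: drop_at_map_add)
  qed
qed (auto intro: den.intros)

lemma den_beta:
  assumes "den \<Gamma> (App (Lam b) r) A F"
  shows "den \<Gamma> (subst b r 0) A F"
proof -
  from assms obtain \<Gamma>1 \<Gamma>2 A1 G Fb where \<Gamma>: "\<Gamma> = \<Gamma>1 ++ \<Gamma>2" and Fb: "den (ext_ctx A1 \<Gamma>1) b A Fb"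
    and G: "den \<Gamma>2 r A1 G" and disj: "dom \<Gamma>1 \<inter> dom \<Gamma>2 = {}"
    and F: "F = (\<lambda>\<rho>. apply_tab (dim_ty A1) (dim_ty A)
      (tabulate (dim_ty A1) (dim_ty A) (\<lambda>a. Fb (insert_at 0 a \<rho>))) (G \<rho>))"
    by (elim den_AppE den_LamE) blast
  have "den (\<Gamma>1 ++ \<Gamma>2) (subst b r 0) A (\<lambda>\<rho>. Fb (insert_at 0 (G \<rho>) \<rho>))"
    using den_subst[OF Fb _ G, of 0] disj by (simp add: ext_ctx_insert_at drop_at_insert_at insert_at_same)
  moreover have "apply_tab (dim_ty A1) (dim_ty A) (tabulate (dim_ty A1) (dim_ty A) (\<lambda>a. Fb (insert_at 0 a \<rho>))) (G \<rho>)
      = Fb (insert_at 0 (G \<rho>) \<rho>)" for \<rho>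
    using den_vanishes_from[OF G] den_vanishes_from[OF Fb]
      den_affine[OF Fb, of "insert_at 0 _ \<rho>" 0, unfolded insert_at_upd_same]
    by (intro apply_tab_tabulate) auto
  ultimately show ?thesis unfolding \<Gamma> F by simp
qed

lemma den_Ite_One: "den \<Gamma> (Ite One u v) A F \<Longrightarrow> den \<Gamma> u A F"
  by (elim den_IteE den_OneE) (auto simp: acomb_def bool_vec_def intro: den_weaken map_le_map_add)

lemma den_Ite_Zero: "den \<Gamma> (Ite Zero u v) A F \<Longrightarrow> den \<Gamma> v A F"
  by (elim den_IteE den_ZeroE) (auto simp: acomb_def bool_vec_def intro: den_weaken map_le_map_add)

lemma den_Coin: "den \<Gamma> Coin A F \<Longrightarrow> A = TB \<and> F = (\<lambda>\<rho>. acomb (1/2) (bool_vec 1) (bool_vec 0))"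
  by (elim den_CoinE) (auto simp: acomb_def bool_vec_def fun_eq_iff)

definition den_reducts :: "ctx \<Rightarrow> dist \<Rightarrow> ty \<Rightarrow> (env \<Rightarrow> vec) \<Rightarrow> bool" where
  "den_reducts \<Gamma> L A F \<longleftrightarrow>
    (\<exists>t'. L = [(1, t')] \<and> den \<Gamma> t' A F) \<or>
    (\<exists>t1 t2 F1 F2. L = [(1/2, t1), (1/2, t2)] \<and> den \<Gamma> t1 A F1 \<and> den \<Gamma> t2 A F2 \<and>
       F = (\<lambda>\<rho>. acomb (1/2) (F1 \<rho>) (F2 \<rho>)))"

lemma den_reducts_context:
  assumes "den_reducts \<Gamma> L A F"
    and "\<And>t' G. den \<Gamma> t' A G \<Longrightarrow> den \<Gamma>' (C t') A' (\<Phi> G)"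
    and "\<And>G1 G2. \<Phi> (\<lambda>\<rho>. acomb (1/2) (G1 \<rho>) (G2 \<rho>)) = (\<lambda>\<rho>. acomb (1/2) (\<Phi> G1 \<rho>) (\<Phi> G2 \<rho>))"
  shows "den_reducts \<Gamma>' (map (apsnd C) L) A' (\<Phi> F)"
  using assms unfolding den_reducts_def by fastforce

lemma den_reducts_Lam:
  assumes "den \<Gamma> (Lam t) A F" and IH: "\<And>\<Gamma> A F. den \<Gamma> t A F \<Longrightarrow> den_reducts \<Gamma> L A F"
  shows "den_reducts \<Gamma> (map (apsnd Lam) L) A F"
proof -
  from assms(1) obtain A1 B Fb where A: "A = Arr A1 B" and Fb: "den (ext_ctx A1 \<Gamma>) t B Fb"
    and F: "F = (\<lambda>\<rho>. tabulate (dim_ty A1) (dim_ty B) (\<lambda>a. Fb (insert_at 0 a \<rho>)))"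
    by (elim den_LamE) blast
  from IH[OF Fb] show ?thesis unfolding A F
    by (rule den_reducts_context[where \<Phi> = "\<lambda>H \<rho>. tabulate (dim_ty A1) (dim_ty B) (\<lambda>a. H (insert_at 0 a \<rho>))"])
      (erule den.lam, simp add: tabulate_acomb)
qed

lemma den_reducts_App:
  assumes "den \<Gamma> (App t r) A F"
  shows "(\<And>\<Gamma> A F. den \<Gamma> t A F \<Longrightarrow> den_reducts \<Gamma> L A F) \<Longrightarrow>
      den_reducts \<Gamma> (map (apsnd (\<lambda>x. App x r)) L) A F"
    and "(\<And>\<Gamma> A F. den \<Gamma> r A F \<Longrightarrow> den_reducts \<Gamma> L A F) \<Longrightarrow>
      den_reducts \<Gamma> (map (apsnd (App t)) L) A F"
proof -
  from assms obtain \<Gamma>1 \<Gamma>2 A1 Ft G where \<Gamma>: "\<Gamma> = \<Gamma>1 ++ \<Gamma>2" and Ft: "den \<Gamma>1 t (Arr A1 A) Ft"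
    and G: "den \<Gamma>2 r A1 G" and disj: "dom \<Gamma>1 \<inter> dom \<Gamma>2 = {}"
    and F: "F = (\<lambda>\<rho>. apply_tab (dim_ty A1) (dim_ty A) (Ft \<rho>) (G \<rho>))"
    by (elim den_AppE) blast
  show "den_reducts \<Gamma> (map (apsnd (\<lambda>x. App x r)) L) A F"
    if "\<And>\<Gamma> A F. den \<Gamma> t A F \<Longrightarrow> den_reducts \<Gamma> L A F"
    using that[OF Ft] unfolding \<Gamma> F
    by (rule den_reducts_context[where \<Phi> = "\<lambda>H \<rho>. apply_tab (dim_ty A1) (dim_ty A) (H \<rho>) (G \<rho>)"])
      (erule den.app[OF _ G disj], simp add: apply_tab_acomb_fun)
  show "den_reducts \<Gamma> (map (apsnd (App t)) L) A F"
    if "\<And>\<Gamma> A F. den \<Gamma> r A F \<Longrightarrow> den_reducts \<Gamma> L A F"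
    using that[OF G] unfolding \<Gamma> F
    by (rule den_reducts_context[where \<Phi> = "\<lambda>H \<rho>. apply_tab (dim_ty A1) (dim_ty A) (Ft \<rho>) (H \<rho>)"])
      (erule den.app[OF Ft _ disj], simp add: apply_tab_acomb_arg)
qed

lemma den_reducts_Ite:
  assumes "den \<Gamma> (Ite c u v) A F"
  shows "(\<And>\<Gamma> A F. den \<Gamma> c A F \<Longrightarrow> den_reducts \<Gamma> L A F) \<Longrightarrow>
      den_reducts \<Gamma> (map (apsnd (\<lambda>x. Ite x u v)) L) A F"
    and "(\<And>\<Gamma> A F. den \<Gamma> u A F \<Longrightarrow> den_reducts \<Gamma> L A F) \<Longrightarrow>
      den_reducts \<Gamma> (map (apsnd (\<lambda>x. Ite c x v)) L) A F"
    and "(\<And>\<Gamma> A F. den \<Gamma> v A F \<Longrightarrow> den_reducts \<Gamma> L A F) \<Longrightarrow>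
      den_reducts \<Gamma> (map (apsnd (Ite c u)) L) A F"
proof -
  from assms obtain \<Gamma>1 \<Gamma>2 Fc U V where \<Gamma>: "\<Gamma> = \<Gamma>1 ++ \<Gamma>2" and Fc: "den \<Gamma>1 c TB Fc"
    and U: "den \<Gamma>2 u A U" and V: "den \<Gamma>2 v A V" and disj: "dom \<Gamma>1 \<inter> dom \<Gamma>2 = {}"
    and F: "F = (\<lambda>\<rho>. acomb (Fc \<rho> 0) (U \<rho>) (V \<rho>))"
    by (elim den_IteE) blast
  show "den_reducts \<Gamma> (map (apsnd (\<lambda>x. Ite x u v)) L) A F"
    if "\<And>\<Gamma> A F. den \<Gamma> c A F \<Longrightarrow> den_reducts \<Gamma> L A F"
    using that[OF Fc] unfolding \<Gamma> F
    by (rule den_reducts_context[where \<Phi> = "\<lambda>H \<rho>. acomb (H \<rho> 0) (U \<rho>) (V \<rho>)"])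
      (erule den.ite[OF _ U V disj], simp add: acomb_acomb_weight)
  show "den_reducts \<Gamma> (map (apsnd (\<lambda>x. Ite c x v)) L) A F"
    if "\<And>\<Gamma> A F. den \<Gamma> u A F \<Longrightarrow> den_reducts \<Gamma> L A F"
    using that[OF U] unfolding \<Gamma> F
    by (rule den_reducts_context[where \<Phi> = "\<lambda>H \<rho>. acomb (Fc \<rho> 0) (H \<rho>) (V \<rho>)"])
      (erule den.ite[OF Fc _ V disj], simp add: acomb_def fun_eq_iff field_simps)
  show "den_reducts \<Gamma> (map (apsnd (Ite c u)) L) A F"
    if "\<And>\<Gamma> A F. den \<Gamma> v A F \<Longrightarrow> den_reducts \<Gamma> L A F"
    using that[OF V] unfolding \<Gamma> F
    by (rule den_reducts_context[where \<Phi> = "\<lambda>H \<rho>. acomb (Fc \<rho> 0) (U \<rho>) (H \<rho>)"])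
      (erule den.ite[OF Fc U _ disj], simp add: acomb_def fun_eq_iff field_simps)
qed

lemma den_step: "rstep t L \<Longrightarrow> den \<Gamma> t A F \<Longrightarrow> den_reducts \<Gamma> L A F"
proof (induction arbitrary: \<Gamma> A F rule: rstep.induct)
  case (beta b r)
  then show ?case by (simp add: den_reducts_def den_beta)
next
  case (ifT u v)
  then show ?case by (simp add: den_reducts_def den_Ite_One)
next
  case (ifF u v)
  then show ?case by (simp add: den_reducts_def den_Ite_Zero)
next
  case coin
  then show ?case using den_Coin den.one den.zero by (fastforce simp: den_reducts_def)
next
  case (lam t L)
  from lam.prems lam.IH show ?case by (rule den_reducts_Lam)
next
  case (appL t L r)
  from appL.prems appL.IH show ?case by (rule den_reducts_App(1))
next
  case (appR r L t)
  from appR.prems appR.IH show ?case by (rule den_reducts_App(2))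
next
  case (ite1 c L u v)
  from ite1.prems ite1.IH show ?case by (rule den_reducts_Ite(1))
next
  case (ite2 u L c v)
  from ite2.prems ite2.IH show ?case by (rule den_reducts_Ite(2))
next
  case (ite3 v L c u)
  from ite3.prems ite3.IH show ?case by (rule den_reducts_Ite(3))
qed

section \<open>Subject reduction and weak normalization\<close>

lemma rstep_shape: "rstep t L \<Longrightarrow> (\<exists>t'. L = [(1, t')]) \<or> (\<exists>t1 t2. L = [(1/2, t1), (1/2, t2)])"
  by (induction rule: rstep.induct) auto

lemma rstep_mass: "rstep t L \<Longrightarrow> sum_list (map fst L) = 1"
  using rstep_shape by fastforce

lemma rstep_typing: "rstep t L \<Longrightarrow> typing \<Gamma> t A \<Longrightarrow> \<forall>x\<in>set L. typing \<Gamma> (snd x) A"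
proof -
  assume "rstep t L" "typing \<Gamma> t A"
  then obtain F where "den_reducts \<Gamma> L A F" using typing_den den_step by blast
  then show ?thesis by (auto simp: den_reducts_def intro: den_typing)
qed

inductive_cases typing_LamE: "typing \<Gamma> (Lam t) A"
inductive_cases typing_AppE: "typing \<Gamma> (App t r) A"
inductive_cases typing_IteE: "typing \<Gamma> (Ite c u v) A"

(* A variable may occur in both branches of an if, so branches count by their maximum; this makes
   substitution for an affine variable at most additive in size (msize_subst). *)
fun msize :: "tm \<Rightarrow> nat" where
  "msize (Var i) = 1"
| "msize (Lam t) = Suc (msize t)"
| "msize (App t u) = Suc (msize t + msize u)"
| "msize One = 1"
| "msize Zero = 1"
| "msize (Ite c u v) = Suc (msize c + max (msize u) (msize v))"
| "msize Coin = 1"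

lemma msize_lift: "msize (lift s k) = msize s"
  by (induction s arbitrary: k) auto

lemma msize_subst_fresh: "typing \<Gamma> b B \<Longrightarrow> \<Gamma> k = None \<Longrightarrow> msize (subst b s k) = msize b"
  by (induction arbitrary: k s rule: typing.induct) (auto simp: ext_ctx_def)

lemma msize_subst: "typing \<Gamma> b B \<Longrightarrow> msize (subst b s k) \<le> msize b + msize s"
proof (induction arbitrary: k s rule: typing.induct)
  case (tlam A \<Gamma> t B)
  then show ?case using tlam.IH[where k = "Suc k" and s = "lift s 0"] by (simp add: msize_lift)
next
  case (tapp \<Gamma> t A B \<Delta> r)
  show ?case
  proof (cases "\<Delta> k = None")
    case True
    then show ?thesis using msize_subst_fresh[OF tapp.hyps(2) True, of s] tapp.IH(1)[where k = k and s = s] by simp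
  next
    case False
    then have "\<Gamma> k = None" using tapp.hyps(3) by auto
    then show ?thesis using msize_subst_fresh[OF tapp.hyps(1), of k s] tapp.IH(2)[where k = k and s = s] by simp
  qed
next
  case (tite \<Gamma> t \<Delta> u A v)
  show ?case
  proof (cases "\<Delta> k = None")
    case True
    then show ?thesis
      using msize_subst_fresh[OF tite.hyps(2) True, of s] msize_subst_fresh[OF tite.hyps(3) True, of s]
        tite.IH(1)[where k = k and s = s] by simp
  next
    case False
    then have "\<Gamma> k = None" using tite.hyps(4) by auto
    then show ?thesis using msize_subst_fresh[OF tite.hyps(1), of k s] tite.IH(2,3)[where k = k and s = s]
      by (simp add: max_def)
  qed
qed auto

lemma rstep_msize: "rstep t L \<Longrightarrow> typing \<Gamma> t A \<Longrightarrow> \<forall>x\<in>set L. msize (snd x) \<le> msize t"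
proof (induction arbitrary: \<Gamma> A rule: rstep.induct)
  case (beta b r)
  then obtain \<Gamma>' B where "typing \<Gamma>' b B" by (auto elim!: typing_AppE typing_LamE)
  then show ?case using msize_subst[of \<Gamma>' b B r 0] by simp
next
  case (lam t L)
  then show ?case by (fastforce elim!: typing_LamE)
next
  case (appL t L r)
  then show ?case by (fastforce elim!: typing_AppE)
next
  case (appR r L t)
  then show ?case by (fastforce elim!: typing_AppE)
next
  case (ite1 c L u v)
  then show ?case by (fastforce elim!: typing_IteE)
next
  case (ite2 u L c v)
  then show ?case by (fastforce elim!: typing_IteE)
next
  case (ite3 v L c u)
  then show ?case by (fastforce elim!: typing_IteE)
qed auto

lemma is_nf_iff: "is_nf t \<longleftrightarrow> (\<forall>L. \<not> rstep t L)"
  unfolding is_nf_def step_def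
  by (metis list.set_intros(1) neq_Nil_conv rstep_shape surj_pair)

inductive_cases rstep_VarE: "rstep (Var i) L"
inductive_cases rstep_OneE: "rstep One L"
inductive_cases rstep_ZeroE: "rstep Zero L"
inductive_cases rstep_LamE: "rstep (Lam t) L"
inductive_cases rstep_AppE: "rstep (App t r) L"
inductive_cases rstep_IteE: "rstep (Ite c u v) L"

lemma is_nf_Var: "is_nf (Var i)"
  by (auto simp: is_nf_iff elim: rstep_VarE)

lemma is_nf_One: "is_nf One"
  by (auto simp: is_nf_iff elim: rstep_OneE)

lemma is_nf_Zero: "is_nf Zero"
  by (auto simp: is_nf_iff elim: rstep_ZeroE)

lemma is_nf_Lam_iff: "is_nf (Lam b) \<longleftrightarrow> is_nf b"
  by (auto simp: is_nf_iff elim: rstep_LamE intro: rstep.lam)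

lemma is_nf_App_iff: "is_nf (App t r) \<longleftrightarrow> is_nf t \<and> is_nf r \<and> (\<forall>b. t \<noteq> Lam b)"
  by (auto simp: is_nf_iff elim: rstep_AppE intro: rstep.intros)

lemma is_nf_Ite_iff: "is_nf (Ite c u v) \<longleftrightarrow> is_nf c \<and> is_nf u \<and> is_nf v \<and> c \<noteq> One \<and> c \<noteq> Zero"
  by (auto simp: is_nf_iff elim: rstep_IteE intro: rstep.intros)

lemma closed_nf_cases:
  "typing \<Gamma> s A \<Longrightarrow> \<Gamma> = Map.empty \<Longrightarrow> is_nf s \<Longrightarrow> s = One \<or> s = Zero \<or> (\<exists>b. s = Lam b)"
proof (induction rule: typing.induct)
  case (tapp \<Gamma> t A B \<Delta> r)
  then have "t = One \<or> t = Zero" by (auto simp: is_nf_App_iff)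
  with tapp.hyps(1) show ?case by (auto elim: typing.cases)
next
  case (tite \<Gamma> t \<Delta> u A v)
  then obtain b where "t = Lam b" by (auto simp: is_nf_Ite_iff)
  with tite.hyps(1) show ?case by (auto elim: typing.cases)
next
  case tcoin
  then show ?case using rstep.coin by (auto simp: is_nf_iff)
qed auto

lemma closed_nf_bool: "typing Map.empty s TB \<Longrightarrow> is_nf s \<Longrightarrow> s = One \<or> s = Zero"
  using closed_nf_cases[of Map.empty s TB] by (auto elim: typing_LamE)

lemma rtranclp_map:
  assumes "\<And>x y. r x y \<Longrightarrow> r (f x) (f y)"
  shows "r\<^sup>*\<^sup>* x y \<Longrightarrow> r\<^sup>*\<^sup>* (f x) (f y)"
  by (induction rule: rtranclp_induct) (auto intro: rtranclp.rtrancl_into_rtrancl assms)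

definition scale :: "real \<Rightarrow> dist \<Rightarrow> dist" where
  "scale p E = map (\<lambda>(u, b). (p * u, b)) E"

lemma length_scale [simp]: "length (scale p E) = length E"
  by (simp add: scale_def)

lemma dstep_iff_scale:
  "dstep D D' \<longleftrightarrow> (\<exists>xs ys p t L. D = xs @ (p, t) # ys \<and> rstep t L \<and> D' = xs @ scale p L @ ys)"
  by (simp add: dstep_def scale_def)

lemma dstep_map_apsnd:
  assumes "\<And>t L. rstep t L \<Longrightarrow> rstep (C t) (map (apsnd C) L)"
  shows "dstep D D' \<Longrightarrow> dstep (map (apsnd C) D) (map (apsnd C) D')"
  unfolding dstep_def
proof (elim exE conjE)
  fix xs ys p t L
  assume "D = xs @ (p, t) # ys" "rstep t L" "D' = xs @ map (\<lambda>(q, t'). (p * q, t')) L @ ys"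
  then show "\<exists>xs ys p t L. map (apsnd C) D = xs @ (p, t) # ys \<and> rstep t L \<and>
      map (apsnd C) D' = xs @ map (\<lambda>(q, t'). (p * q, t')) L @ ys"
    using assms
    by (intro exI[of _ "map (apsnd C) xs"] exI[of _ "map (apsnd C) ys"] exI[of _ p] exI[of _ "C t"]
        exI[of _ "map (apsnd C) L"]) (auto simp: case_prod_beta)
qed

lemma dstep_frame: "dstep D D' \<Longrightarrow> dstep (xs @ D @ ys) (xs @ D' @ ys)"
  unfolding dstep_def by (metis append.assoc append_Cons)

lemma dstep_scale: "dstep D D' \<Longrightarrow> dstep (scale c D) (scale c D')"
  unfolding dstep_def
proof (elim exE conjE)
  fix xs ys p t L
  assume "D = xs @ (p, t) # ys" "rstep t L" "D' = xs @ map (\<lambda>(q, t'). (p * q, t')) L @ ys"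
  then show "\<exists>xs ys p t L. scale c D = xs @ (p, t) # ys \<and> rstep t L \<and>
      scale c D' = xs @ map (\<lambda>(q, t'). (p * q, t')) L @ ys"
    by (intro exI[of _ "scale c xs"] exI[of _ "scale c ys"] exI[of _ "c * p"])
      (auto simp: scale_def case_prod_beta mult.assoc)
qed

lemma dsteps_frame: "dstep\<^sup>*\<^sup>* D D' \<Longrightarrow> dstep\<^sup>*\<^sup>* (xs @ D @ ys) (xs @ D' @ ys)"
  by (rule rtranclp_map[of dstep "\<lambda>D. xs @ D @ ys"]) (rule dstep_frame)

lemma dsteps_scale: "dstep\<^sup>*\<^sup>* D D' \<Longrightarrow> dstep\<^sup>*\<^sup>* (scale c D) (scale c D')"
  by (rule rtranclp_map[of dstep "scale c"]) (rule dstep_scale)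

lemma dsteps_invariant:
  assumes "\<And>t L. rstep t L \<Longrightarrow> P t \<Longrightarrow> \<forall>x\<in>set L. P (snd x)"
  shows "dstep\<^sup>*\<^sup>* D E \<Longrightarrow> \<forall>x\<in>set D. P (snd x) \<Longrightarrow> \<forall>x\<in>set E. P (snd x)"
proof (induction rule: rtranclp_induct)
  case (step E E')
  from step.hyps(2) obtain xs ys p t L where "E = xs @ (p, t) # ys" "rstep t L"
    "E' = xs @ map (\<lambda>(q, t'). (p * q, t')) L @ ys"
    unfolding dstep_def by blast
  with step.IH[OF step.prems] assms show ?case by (fastforce simp: case_prod_beta)
qed

lemma reduces_to_context:
  assumes "\<And>t L. rstep t L \<Longrightarrow> rstep (C t) (map (apsnd C) L)"
  shows "reduces_to t D \<Longrightarrow> reduces_to (C t) (map (apsnd C) D)"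
  unfolding reduces_to_def using rtranclp_map[of dstep "map (apsnd C)" "[(1, t)]" D, OF dstep_map_apsnd[OF assms]]
  by simp

lemma weighted_Cons: "weighted ((p, s) # D) (E # Es) = scale p E @ weighted D Es"
  by (simp add: weighted_def scale_def)

lemma weighted_map_apsnd: "weighted (map (apsnd C) D) Es = weighted D Es"
  by (induction D Es rule: list_induct2') (auto simp: weighted_def)

lemma dsteps_weighted: "list_all2 (\<lambda>x E. reduces_to (snd x) E) D Es \<Longrightarrow> dstep\<^sup>*\<^sup>* D (weighted D Es)"
proof (induction rule: list_all2_induct)
  case Nil
  then show ?case by (simp add: weighted_def)
next
  case (Cons x D E Es)
  obtain p s where x: "x = (p, s)" by fastforce
  have "dstep\<^sup>*\<^sup>* (scale p [(1, s)]) (scale p E)"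
    using Cons.hyps(1) x by (intro dsteps_scale) (simp add: reduces_to_def)
  then have "dstep\<^sup>*\<^sup>* ([] @ [(p, s)] @ D) ([] @ scale p E @ D)"
    by (intro dsteps_frame) (simp add: scale_def)
  moreover have "dstep\<^sup>*\<^sup>* (scale p E @ D @ []) (scale p E @ weighted D Es @ [])"
    using Cons.IH by (rule dsteps_frame)
  ultimately show ?case by (simp add: x weighted_Cons)
qed

definition normal_dist :: "dist \<Rightarrow> bool" where
  "normal_dist E \<longleftrightarrow> (\<forall>x\<in>set E. is_nf (snd x))"

definition normalizable :: "tm \<Rightarrow> bool" where
  "normalizable t \<longleftrightarrow> (\<exists>E. reduces_to t E \<and> normal_dist E)"

lemma list_all2_choice: "\<forall>x\<in>set xs. \<exists>y. P x y \<Longrightarrow> \<exists>ys. list_all2 P xs ys"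
proof (induction xs)
  case (Cons x xs)
  then obtain y ys where "P x y" "list_all2 P xs ys" by auto
  then show ?case by (intro exI[of _ "y # ys"]) simp
qed (intro exI[of _ "[]"], simp)

lemma normal_dist_append: "normal_dist (xs @ ys) \<longleftrightarrow> normal_dist xs \<and> normal_dist ys"
  by (auto simp: normal_dist_def)

lemma normal_dist_scale: "normal_dist (scale p E) \<longleftrightarrow> normal_dist E"
  by (auto simp: normal_dist_def scale_def)

lemma normal_dist_weighted: "list_all2 (\<lambda>x E. normal_dist E) D Es \<Longrightarrow> normal_dist (weighted D Es)"
proof (induction rule: list_all2_induct)
  case (Cons x D E Es)
  then show ?case by (cases x) (simp add: weighted_Cons normal_dist_append normal_dist_scale)
qed (simp add: normal_dist_def weighted_def)

lemma dsteps_normal_dist: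
  assumes "\<forall>x\<in>set D. normalizable (snd x)"
  shows "\<exists>E. dstep\<^sup>*\<^sup>* D E \<and> normal_dist E"
proof -
  obtain Es where "list_all2 (\<lambda>x E. reduces_to (snd x) E \<and> normal_dist E) D Es"
    using list_all2_choice[of D "\<lambda>x E. reduces_to (snd x) E \<and> normal_dist E"] assms
    unfolding normalizable_def by blast
  then have "list_all2 (\<lambda>x E. reduces_to (snd x) E) D Es" "list_all2 (\<lambda>x E. normal_dist E) D Es"
    by (auto elim: list_all2_mono)
  then show ?thesis using dsteps_weighted normal_dist_weighted by blast
qed

lemma dstep_single: "rstep t L \<Longrightarrow> dstep [(1, t)] L"
  unfolding dstep_def by (rule exI[of _ "[]"], rule exI[of _ "[]"]) (auto simp: case_prod_beta)

lemma normalizable_step: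
  assumes "rstep t L" and "\<forall>x\<in>set L. normalizable (snd x)"
  shows "normalizable t"
proof -
  obtain E where "dstep\<^sup>*\<^sup>* L E" "normal_dist E" using dsteps_normal_dist assms(2) by blast
  then show ?thesis using dstep_single[OF assms(1)] unfolding normalizable_def reduces_to_def
    by (meson converse_rtranclp_into_rtranclp)
qed

lemma normalizable_context:
  assumes "\<And>t L. rstep t L \<Longrightarrow> rstep (C t) (map (apsnd C) L)"
    and "reduces_to t E" and "\<forall>x\<in>set E. normalizable (C (snd x))"
  shows "normalizable (C t)"
proof -
  obtain E' where "dstep\<^sup>*\<^sup>* (map (apsnd C) E) E'" "normal_dist E'"
    using dsteps_normal_dist[of "map (apsnd C) E"] assms(3) by auto
  then show ?thesis using reduces_to_context[OF assms(1,2)] unfolding normalizable_def reduces_to_def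
    by (meson rtranclp_trans)
qed

lemma normalizable_nf: "is_nf t \<Longrightarrow> normalizable t"
  unfolding normalizable_def normal_dist_def reduces_to_def by (intro exI[of _ "[(1, t)]"]) auto

lemma reduces_to_typing_msize:
  assumes "reduces_to t E" and "typing \<Gamma> t A"
  shows "\<forall>x\<in>set E. typing \<Gamma> (snd x) A \<and> msize (snd x) \<le> msize t"
proof -
  let ?P = "\<lambda>s. typing \<Gamma> s A \<and> msize s \<le> msize t"
  have "\<forall>x\<in>set L. ?P (snd x)" if "rstep s L" "?P s" for s L
    using that rstep_typing rstep_msize by fastforce
  moreover have "\<forall>x\<in>set [(1, t)]. ?P (snd x)" using assms(2) by simp
  ultimately show ?thesis using dsteps_invariant[of ?P] assms(1) unfolding reduces_to_def by blast
qed

lemma normalizable_Lam: "normalizable b \<Longrightarrow> normalizable (Lam b)"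
proof -
  assume "normalizable b"
  then obtain E where "reduces_to b E" "normal_dist E" unfolding normalizable_def by blast
  then show ?thesis
    by (intro normalizable_context[OF rstep.lam]) (auto simp: normal_dist_def is_nf_Lam_iff normalizable_nf)
qed

lemma normalizable_Ite:
  assumes "normalizable c" and "normalizable u" and "normalizable v"
  shows "normalizable (Ite c u v)"
proof -
  obtain Ec Eu Ev where Ec: "reduces_to c Ec" "normal_dist Ec"
    and Eu: "reduces_to u Eu" "normal_dist Eu" and Ev: "reduces_to v Ev" "normal_dist Ev"
    using assms unfolding normalizable_def by blast
  have nf_nf_nf: "normalizable (Ite c' u' v')" if "is_nf c'" "is_nf u'" "is_nf v'" for c' u' v'
  proof -
    consider "c' = One" | "c' = Zero" | "c' \<noteq> One" "c' \<noteq> Zero" by blast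
    then show ?thesis
    proof cases
      case 1
      then show ?thesis using normalizable_step[OF rstep.ifT] normalizable_nf that by simp
    next
      case 2
      then show ?thesis using normalizable_step[OF rstep.ifF] normalizable_nf that by simp
    next
      case 3
      then show ?thesis using normalizable_nf that by (simp add: is_nf_Ite_iff)
    qed
  qed
  have nf_nf_v: "normalizable (Ite c' u' v)" if "is_nf c'" "is_nf u'" for c' u'
    using Ev nf_nf_nf that
    by (intro normalizable_context[OF rstep.ite3 Ev(1)]) (auto simp: normal_dist_def)
  have nf_u_v: "normalizable (Ite c' u v)" if "is_nf c'" for c'
    using Eu nf_nf_v that
    by (intro normalizable_context[OF rstep.ite2 Eu(1)]) (auto simp: normal_dist_def)
  show ?thesis
    using Ec nf_u_v by (intro normalizable_context[OF rstep.ite1 Ec(1)]) (auto simp: normal_dist_def)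
qed

lemma normalizable_App:
  assumes t: "typing \<Gamma>1 t (Arr B A)" "normalizable t" and r: "typing \<Gamma>2 r B" "normalizable r"
    and beta: "\<And>b r'. typing \<Gamma>1 (Lam b) (Arr B A) \<Longrightarrow> msize (Lam b) \<le> msize t \<Longrightarrow>
      typing \<Gamma>2 r' B \<Longrightarrow> msize r' \<le> msize r \<Longrightarrow> normalizable (subst b r' 0)"
  shows "normalizable (App t r)"
proof -
  obtain E1 E2 where E1: "reduces_to t E1" "normal_dist E1" and E2: "reduces_to r E2" "normal_dist E2"
    using t(2) r(2) unfolding normalizable_def by blast
  have nf_nf: "normalizable (App t' r')"
    if t': "typing \<Gamma>1 t' (Arr B A)" "msize t' \<le> msize t" "is_nf t'"
    and r': "typing \<Gamma>2 r' B" "msize r' \<le> msize r" "is_nf r'" for t' r'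
  proof (cases "\<exists>b. t' = Lam b")
    case True
    then obtain b where b: "t' = Lam b" by blast
    then show ?thesis using beta[OF t'(1,2)[unfolded b] r'(1,2)] normalizable_step[OF rstep.beta] by simp
  next
    case False
    then show ?thesis using t'(3) r'(3) by (simp add: normalizable_nf is_nf_App_iff)
  qed
  have nf_r: "normalizable (App t' r)" if "typing \<Gamma>1 t' (Arr B A)" "msize t' \<le> msize t" "is_nf t'" for t'
    using reduces_to_typing_msize[OF E2(1) r(1)] E2(2) nf_nf[OF that]
    by (intro normalizable_context[OF rstep.appR E2(1)]) (auto simp: normal_dist_def)
  show ?thesis
    using reduces_to_typing_msize[OF E1(1) t(1)] E1(2) nf_r
    by (intro normalizable_context[OF rstep.appL E1(1)]) (auto simp: normal_dist_def)
qed

theorem typing_normalizable: "typing \<Gamma> t A \<Longrightarrow> normalizable t"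
proof (induction "msize t" arbitrary: t \<Gamma> A rule: less_induct)
  case less
  show ?case
  proof (cases t)
    case Coin
    then show ?thesis using normalizable_step[OF rstep.coin] by (simp add: normalizable_nf is_nf_One is_nf_Zero)
  next
    case (Lam b)
    with less.prems obtain A1 B where "typing (ext_ctx A1 \<Gamma>) b B" by (auto elim: typing_LamE)
    with less.hyps show ?thesis by (simp add: Lam normalizable_Lam)
  next
    case (App t1 r1)
    from less.prems App obtain \<Gamma>1 \<Gamma>2 A1 where \<Gamma>: "\<Gamma> = \<Gamma>1 ++ \<Gamma>2" and t1: "typing \<Gamma>1 t1 (Arr A1 A)"
      and r1: "typing \<Gamma>2 r1 A1" and disj: "dom \<Gamma>1 \<inter> dom \<Gamma>2 = {}"
      by (auto elim: typing_AppE)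
    show ?thesis unfolding App
    proof (rule normalizable_App[OF t1 _ r1])
      show "normalizable t1" "normalizable r1"
        using less.hyps[OF _ t1] less.hyps[OF _ r1] by (simp_all add: App)
      fix b r' assume b: "typing \<Gamma>1 (Lam b) (Arr A1 A)" "msize (Lam b) \<le> msize t1"
        and r': "typing \<Gamma>2 r' A1" "msize r' \<le> msize r1"
      have typed: "typing \<Gamma> (subst b r' 0) A"
        using rstep_typing[OF rstep.beta typing.tapp[OF b(1) r'(1) disj]] \<Gamma> by simp
      obtain \<Gamma>' B where "typing \<Gamma>' b B" using b(1) by (auto elim: typing_LamE)
      then have "msize (subst b r' 0) < msize t"
        using msize_subst[of \<Gamma>' b B r' 0] App b(2) r'(2) by simp
      from less.hyps[OF this typed] show "normalizable (subst b r' 0)" .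
    qed
  next
    case (Ite c u v)
    from less.prems Ite obtain \<Gamma>1 \<Gamma>2 where "typing \<Gamma>1 c TB" "typing \<Gamma>2 u A" "typing \<Gamma>2 v A"
      by (auto elim: typing_IteE)
    moreover have "msize c < msize t" "msize u < msize t" "msize v < msize t" using Ite by auto
    ultimately show ?thesis using less.hyps normalizable_Ite Ite by blast
  qed (simp_all add: normalizable_nf is_nf_Var is_nf_One is_nf_Zero)
qed

section \<open>Expected denotation of a distribution\<close>

(* Closed denotations do not depend on the environment (den_local), so any one may be used. *)
definition den_value :: "tm \<Rightarrow> real \<Rightarrow> bool" where
  "den_value s w \<longleftrightarrow> (\<exists>F. den Map.empty s TB F \<and> w = F (\<lambda>_ _. 0) 0)"

definition weighted_sum :: "dist \<Rightarrow> real list \<Rightarrow> real" where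
  "weighted_sum D ws = sum_list (map2 (\<lambda>x w. fst x * w) D ws)"

definition has_expectation :: "dist \<Rightarrow> real \<Rightarrow> bool" where
  "has_expectation D v \<longleftrightarrow>
    (\<exists>ws. list_all2 (\<lambda>x w. den_value (snd x) w) D ws \<and> v = weighted_sum D ws)"

lemma weighted_sum_append:
  "length xs = length us \<Longrightarrow> weighted_sum (xs @ ys) (us @ vs) = weighted_sum xs us + weighted_sum ys vs"
  by (simp add: weighted_sum_def)

lemma weighted_sum_Cons: "weighted_sum (x # xs) (u # us) = fst x * u + weighted_sum xs us"
  by (simp add: weighted_sum_def)

lemma weighted_sum_scale:
  "length L = length ws \<Longrightarrow> weighted_sum (scale p L) ws = p * weighted_sum L ws"
  by (induction L ws rule: list_induct2) (auto simp: weighted_sum_def scale_def algebra_simps)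

lemma den_value_step:
  assumes "rstep s L" and "den_value s w"
  shows "\<exists>ws. list_all2 (\<lambda>x w. den_value (snd x) w) L ws \<and> w = weighted_sum L ws"
proof -
  obtain F where F: "den Map.empty s TB F" and w: "w = F (\<lambda>_ _. 0) 0"
    using assms(2) unfolding den_value_def by blast
  from den_step[OF assms(1) F] show ?thesis
    unfolding den_reducts_def
  proof (elim disjE exE conjE)
    fix t' assume "L = [(1, t')]" "den Map.empty t' TB F"
    then show ?thesis using w by (intro exI[of _ "[w]"]) (auto simp: den_value_def weighted_sum_def)
  next
    fix t1 t2 F1 F2 assume "L = [(1/2, t1), (1/2, t2)]" "den Map.empty t1 TB F1" "den Map.empty t2 TB F2"
      "F = (\<lambda>\<rho>. acomb (1/2) (F1 \<rho>) (F2 \<rho>))"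
    then show ?thesis using w
      by (intro exI[of _ "[F1 (\<lambda>_ _. 0) 0, F2 (\<lambda>_ _. 0) 0]"])
        (auto simp: den_value_def weighted_sum_def acomb_def)
  qed
qed

lemma has_expectation_dstep: "dstep D D' \<Longrightarrow> has_expectation D v \<Longrightarrow> has_expectation D' v"
proof -
  let ?P = "\<lambda>x w. den_value (snd x) w"
  assume "dstep D D'" "has_expectation D v"
  then obtain xs ys p t L where D: "D = xs @ (p, t) # ys" and L: "rstep t L" and D': "D' = xs @ scale p L @ ys"
    unfolding dstep_iff_scale by blast
  from \<open>has_expectation D v\<close> obtain ws where ws: "list_all2 ?P D ws" and v: "v = weighted_sum D ws"
    unfolding has_expectation_def by blast
  from ws obtain ws1 w ws2 where ws_split: "ws = ws1 @ w # ws2" and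
    ws1: "list_all2 ?P xs ws1" and w: "den_value t w" and ws2: "list_all2 ?P ys ws2"
    unfolding D by (auto simp: list_all2_append1 list_all2_Cons1)
  obtain wL where wL: "list_all2 ?P L wL" and w_eq: "w = weighted_sum L wL"
    using den_value_step[OF L w] by blast
  have "list_all2 ?P D' (ws1 @ wL @ ws2)"
    using ws1 wL ws2 unfolding D' by (auto simp: scale_def list_all2_map1 case_prod_beta
      intro!: list_all2_appendI elim: list_all2_mono)
  moreover have "weighted_sum D' (ws1 @ wL @ ws2) = v"
    using list_all2_lengthD[OF ws1] list_all2_lengthD[OF wL]
    by (simp add: D' D v ws_split w_eq weighted_sum_append weighted_sum_Cons weighted_sum_scale)
  ultimately show ?thesis unfolding has_expectation_def by blast
qed

lemma has_expectation_reduces_to: "reduces_to s E \<Longrightarrow> den_value s w \<Longrightarrow> has_expectation E w"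
proof -
  assume "reduces_to s E" "den_value s w"
  moreover have "has_expectation [(1, s)] w"
    using \<open>den_value s w\<close> unfolding has_expectation_def by (intro exI[of _ "[w]"]) (simp add: weighted_sum_def)
  ultimately show ?thesis unfolding reduces_to_def
    by (induction rule: rtranclp_induct) (auto intro: has_expectation_dstep)
qed

definition mass :: "dist \<Rightarrow> real" where
  "mass D = sum_list (map fst D)"

definition mass_at :: "tm \<Rightarrow> dist \<Rightarrow> real" where
  "mass_at s D = sum_list (map fst (filter (\<lambda>x. snd x = s) D))"

lemma mass_dstep: "dstep D D' \<Longrightarrow> mass D' = mass D"
  unfolding dstep_iff_scale
proof (elim exE conjE)
  fix xs ys p t L assume "D = xs @ (p, t) # ys" "rstep t L" "D' = xs @ scale p L @ ys"
  moreover have "mass (scale p L) = p * mass L"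
    by (induction L) (auto simp: mass_def scale_def algebra_simps)
  ultimately show "mass D' = mass D" using rstep_mass by (simp add: mass_def)
qed

lemma mass_reduces_to: "reduces_to s E \<Longrightarrow> mass E = 1"
proof -
  assume "reduces_to s E"
  then have "mass E = mass [(1, s)]" unfolding reduces_to_def
    by (induction rule: rtranclp_induct) (auto dest: mass_dstep)
  then show ?thesis by (simp add: mass_def)
qed

lemma den_value_One: "den_value One w \<Longrightarrow> w = 1"
  by (auto simp: den_value_def bool_vec_def elim: den_OneE)

lemma den_value_Zero: "den_value Zero w \<Longrightarrow> w = 0"
  by (auto simp: den_value_def bool_vec_def elim: den_ZeroE)

lemma boolean_dist_masses:
  assumes "\<forall>x\<in>set E. snd x = One \<or> snd x = Zero" and "has_expectation E w" and "mass E = 1"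
  shows "mass_at u E = (if u = One then w else if u = Zero then 1 - w else 0)"
proof -
  obtain ws where ws: "list_all2 (\<lambda>x w. den_value (snd x) w) E ws" and w: "w = weighted_sum E ws"
    using assms(2) unfolding has_expectation_def by blast
  have "weighted_sum E ws = mass_at One E"
    using ws assms(1)
    by (induction rule: list_all2_induct)
      (auto simp: weighted_sum_def mass_at_def dest: den_value_One den_value_Zero)
  moreover have "mass E = mass_at One E + mass_at Zero E"
    using assms(1) by (induction E) (auto simp: mass_def mass_at_def)
  moreover have "mass_at u E = 0" if "u \<noteq> One" "u \<noteq> Zero"
    using assms(1) that by (induction E) (auto simp: mass_at_def)
  ultimately show ?thesis using w assms(3) by auto
qed

lemma normal_dists_sim:
  assumes "typing Map.empty s TB" and "reduces_to s E1" and "reduces_to s E2"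
    and "normal_dist E1" and "normal_dist E2"
  shows "dist_sim E1 E2"
proof -
  obtain F where "den Map.empty s TB F" using typing_den[OF assms(1)] by blast
  then have w: "den_value s (F (\<lambda>_ _. 0) 0)" unfolding den_value_def by blast
  have "mass_at u E = (if u = One then F (\<lambda>_ _. 0) 0 else if u = Zero then 1 - F (\<lambda>_ _. 0) 0 else 0)"
    if "reduces_to s E" "normal_dist E" for E u
  proof (rule boolean_dist_masses)
    show "\<forall>x\<in>set E. snd x = One \<or> snd x = Zero"
      using reduces_to_typing_msize[OF that(1) assms(1)] that(2) closed_nf_bool
      by (auto simp: normal_dist_def)
  qed (use that has_expectation_reduces_to[OF _ w] mass_reduces_to in auto)
  then show ?thesis using assms(2-5) unfolding dist_sim_def mass_at_def[symmetric] by simp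
qed

lemma rstep_plug: "rstep t L \<Longrightarrow> rstep (plug t vs) (map (apsnd (\<lambda>x. plug x vs)) L)"
proof (induction vs arbitrary: t L)
  case Nil
  then show ?case by (simp add: plug_def apsnd_def map_prod_def case_prod_beta)
next
  case (Cons v vs)
  from Cons.IH[OF rstep.appL[OF Cons.prems, of v]] show ?case
    by (simp add: plug_def comp_def apsnd_def map_prod_def case_prod_beta)
qed

lemma elim_ctx_normal_decomposition:
  assumes "typing Map.empty t A" and "elim_ctx A vs" and "reduces_to t D"
  shows "\<exists>Es. list_all2 (\<lambda>x E. reduces_to (plug (snd x) vs) E \<and> normal_dist E) D Es \<and>
    reduces_to (plug t vs) (weighted D Es) \<and> normal_dist (weighted D Es)"
proof -
  have "normalizable (plug (snd x) vs)" if "x \<in> set D" for x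
    using reduces_to_typing_msize[OF assms(3,1)] that assms(2)
    by (auto simp: elim_ctx_def intro: typing_normalizable)
  then obtain Es where Es: "list_all2 (\<lambda>x E. reduces_to (plug (snd x) vs) E \<and> normal_dist E) D Es"
    using list_all2_choice[of D "\<lambda>x E. reduces_to (plug (snd x) vs) E \<and> normal_dist E"]
    unfolding normalizable_def by blast
  have "reduces_to (plug t vs) (map (apsnd (\<lambda>x. plug x vs)) D)"
    using reduces_to_context[OF rstep_plug assms(3)] .
  moreover have "dstep\<^sup>*\<^sup>* (map (apsnd (\<lambda>x. plug x vs)) D) (weighted D Es)"
    using dsteps_weighted[of "map (apsnd (\<lambda>x. plug x vs)) D" Es] Es
    by (simp add: weighted_map_apsnd list_all2_map1 list_all2_mono)
  ultimately have "reduces_to (plug t vs) (weighted D Es)"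
    unfolding reduces_to_def by (rule rtranclp_trans)
  moreover have "normal_dist (weighted D Es)"
    using Es by (auto intro: normal_dist_weighted elim: list_all2_mono)
  ultimately show ?thesis using Es by blast
qed

theorem theorem1:
  assumes "typing Map.empty t A"
    and "reduces_to t D1"
    and "reduces_to t D2"
  shows "comp_equiv A D1 D2"
  unfolding comp_equiv_def
proof (intro conjI allI impI)
  show "\<forall>x\<in>set D1 \<union> set D2. typing Map.empty (snd x) A"
    using reduces_to_typing_msize[OF assms(2,1)] reduces_to_typing_msize[OF assms(3,1)] by auto
  fix vs assume vs: "elim_ctx A vs"
  obtain Es1 Es2 where
    Es1: "list_all2 (\<lambda>x E. reduces_to (plug (snd x) vs) E \<and> normal_dist E) D1 Es1"
      "reduces_to (plug t vs) (weighted D1 Es1)" "normal_dist (weighted D1 Es1)" and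
    Es2: "list_all2 (\<lambda>x E. reduces_to (plug (snd x) vs) E \<and> normal_dist E) D2 Es2"
      "reduces_to (plug t vs) (weighted D2 Es2)" "normal_dist (weighted D2 Es2)"
    using elim_ctx_normal_decomposition[OF assms(1) vs] assms(2,3) by meson
  have "typing Map.empty (plug t vs) TB" using vs assms(1) by (simp add: elim_ctx_def)
  then have "dist_sim (weighted D1 Es1) (weighted D2 Es2)"
    using Es1(2) Es2(2) Es1(3) Es2(3) by (rule normal_dists_sim)
  with Es1(1) Es2(1) show "\<exists>E1 E2. length E1 = length D1 \<and> length E2 = length D2 \<and>
      (\<forall>i<length D1. reduces_to (plug (snd (D1 ! i)) vs) (E1 ! i) \<and> (\<forall>x\<in>set (E1 ! i). is_nf (snd x))) \<and>
      (\<forall>j<length D2. reduces_to (plug (snd (D2 ! j)) vs) (E2 ! j) \<and> (\<forall>x\<in>set (E2 ! j). is_nf (snd x))) \<and>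
      dist_sim (weighted D1 E1) (weighted D2 E2)"
    unfolding list_all2_conv_all_nth normal_dist_def by metis
qed

end
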